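(* Let $(\mathcal{V},g)$ be a finite-dimensional real scalar product space, let $J_1,\dots,J_m$ be skew-adjoint endomorphisms of $\mathcal{V}$ satisfying $J_iJ_j+J_jJ_i=2c_i\delta_{ij}\,\mathrm{id}$ for all $1\le i,j\le m$, where $c_1,\dots,c_m\in\mathbb{R}$ and at most one of the $c_i$ equals $0$, and let $\mu_0,\dots,\mu_m\in\mathbb{R}$. Then $R=\mu_0R^0+\sum_{i=1}^m\mu_iR^{J_i}$ is Jacobi-dual.
   Context: A scalar product space is a finite-dimensional real vector space with a nondegenerate symmetric bilinear form $g$; $\varepsilon_X=g(X,X)$, and $X$ is nonnull if $\varepsilon_X\neq 0$. $R^0(X,Y,Z,W)=g(Y,Z)g(X,W)-g(X,Z)g(Y,W)$; for skew-adjoint $J$, $R^J(X,Y,Z,W)=g(JX,Z)g(JY,W)-g(JY,Z)g(JX,W)+2g(JX,Y)g(JZ,W)$. The Jacobi operator of an algebraic curvature tensor $R$ is $\mathcal{J}_X(Y)=\sum_{i=1}^n\varepsilon_{E_i}R(Y,X,X,E_i)E_i$ for an orthonormal basis $(E_i)$. An eigenvector of $\mathcal{J}_X$ is a nonzero $Y$ with $\mathcal{J}_X(Y)=\lambda Y$ for some $\lambda\in\mathbb{R}$. $R$ is Jacobi-dual if for all $X,Y\in\mathcal{V}$ with $X$ nonnull: whenever $Y$ is an eigenvector of $\mathcal{J}_X$, then $X$ is an eigenvector of $\mathcal{J}_Y$. *)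

theory Defs
  imports "HOL-Analysis.Analysis"
begin

text \<open>A scalar product space: a finite-dimensional real vector space (a type of
class euclidean_space; its own inner product is ignored) together with a
nondegenerate symmetric bilinear form g.\<close>

definition scalar_product :: "('a::euclidean_space \<Rightarrow> 'a \<Rightarrow> real) \<Rightarrow> bool" where
  "scalar_product g \<longleftrightarrow> bilinear g \<and> (\<forall>x y. g x y = g y x)
     \<and> (\<forall>x. (\<forall>y. g x y = 0) \<longrightarrow> x = 0)"

definition orthonormal_basis :: "('a::euclidean_space \<Rightarrow> 'a \<Rightarrow> real) \<Rightarrow> 'a set \<Rightarrow> bool" where
  "orthonormal_basis g B \<longleftrightarrow> independent B \<and> span B = UNIV
     \<and> (\<forall>e\<in>B. g e e = 1 \<or> g e e = -1)
     \<and> (\<forall>e\<in>B. \<forall>f\<in>B. e \<noteq> f \<longrightarrow> g e f = 0)"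

definition skew_adjoint :: "('a::euclidean_space \<Rightarrow> 'a \<Rightarrow> real) \<Rightarrow> ('a \<Rightarrow> 'a) \<Rightarrow> bool" where
  "skew_adjoint g J \<longleftrightarrow> linear J \<and> (\<forall>x y. g (J x) y = - g x (J y))"

definition R0 :: "('a \<Rightarrow> 'a \<Rightarrow> real) \<Rightarrow> 'a \<Rightarrow> 'a \<Rightarrow> 'a \<Rightarrow> 'a \<Rightarrow> real" where
  "R0 g X Y Z W = g Y Z * g X W - g X Z * g Y W"

definition RJ :: "('a \<Rightarrow> 'a \<Rightarrow> real) \<Rightarrow> ('a \<Rightarrow> 'a) \<Rightarrow> 'a \<Rightarrow> 'a \<Rightarrow> 'a \<Rightarrow> 'a \<Rightarrow> real" where
  "RJ g J X Y Z W = g (J X) Z * g (J Y) W - g (J Y) Z * g (J X) W + 2 * g (J X) Y * g (J Z) W"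

definition jacobi_op :: "('a::euclidean_space \<Rightarrow> 'a \<Rightarrow> real) \<Rightarrow> ('a \<Rightarrow> 'a \<Rightarrow> 'a \<Rightarrow> 'a \<Rightarrow> real)
    \<Rightarrow> 'a \<Rightarrow> 'a \<Rightarrow> 'a" where
  "jacobi_op g R X Y = (let B = (SOME B. orthonormal_basis g B) in
     (\<Sum>e\<in>B. (g e e * R Y X X e) *\<^sub>R e))"

definition eigenvector :: "('a::real_vector \<Rightarrow> 'a) \<Rightarrow> 'a \<Rightarrow> bool" where
  "eigenvector T Y \<longleftrightarrow> Y \<noteq> 0 \<and> (\<exists>l::real. T Y = l *\<^sub>R Y)"

definition jacobi_dual :: "('a::euclidean_space \<Rightarrow> 'a \<Rightarrow> real) \<Rightarrow> ('a \<Rightarrow> 'a \<Rightarrow> 'a \<Rightarrow> 'a \<Rightarrow> real) \<Rightarrow> bool" where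
  "jacobi_dual g R \<longleftrightarrow> (\<forall>X Y. g X X \<noteq> 0 \<longrightarrow> eigenvector (jacobi_op g R X) Y
       \<longrightarrow> eigenvector (jacobi_op g R Y) X)"

end

theory Submission
  imports Defs
begin

(*
  For g-nonnull X, skew-adjointness gives both Jacobi operators in closed form:
  with a = mu_0 and b_i = mu_i g(J_i Y, X),
    Jac_X Y = a (g(X,X) Y - g(X,Y) X) + 3 sum_i b_i J_i X,
    Jac_Y X = a (g(Y,Y) X - g(X,Y) Y) - 3 sum_i b_i J_i Y.
  If Jac_X Y = lambda Y, then d Y = alpha X - 3 sum_i b_i J_i X with d = a g(X,X) - lambda
  and alpha = a g(X,Y). For d ~= 0, applying sum_i b_i J_i and the Clifford relation
  (sum_i b_i J_i)^2 = sum_i b_i^2 c_i shows that alpha Y + 3 sum_i b_i J_i Y is a multiple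
  of X. For d = 0 the vector sum_i b_i J_i X is a multiple of X and g-orthogonal to X,
  hence zero; pairing it with J_k X gives b_k c_k = 0, so, as at most one c_k vanishes,
  every term b_k J_k X vanishes, which forces b_k = 0. Either way Jac_Y X is a multiple of X.
*)

locale scalar_product_space =
  fixes g :: "'a::euclidean_space \<Rightarrow> 'a \<Rightarrow> real"
  assumes scalar_product: "scalar_product g"
begin

lemma bilinear: "bilinear g"
  using scalar_product unfolding scalar_product_def by blast

lemma sym: "g x y = g y x"
  using scalar_product unfolding scalar_product_def by blast

lemma nondegenerate: "(\<And>y. g x y = 0) \<Longrightarrow> x = 0"
  using scalar_product unfolding scalar_product_def by blast

lemma g_sum_left: "g (sum f S) y = (\<Sum>i\<in>S. g (f i) y)"
  using bilinear linear_sum[of "\<lambda>x. g x y"] unfolding bilinear_def by simp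

lemma g_sum_right: "g y (sum f S) = (\<Sum>i\<in>S. g y (f i))"
  using bilinear linear_sum[of "g y"] unfolding bilinear_def by simp

lemmas g_linear_simps [simp] =
  bilinear_ladd[OF bilinear] bilinear_radd[OF bilinear]
  bilinear_lsub[OF bilinear] bilinear_rsub[OF bilinear]
  bilinear_lneg[OF bilinear] bilinear_rneg[OF bilinear]
  bilinear_lmul[OF bilinear] bilinear_rmul[OF bilinear]
  bilinear_lzero[OF bilinear] bilinear_rzero[OF bilinear]
  g_sum_left g_sum_right

lemma nonnull_vector_exists:
  assumes S: "subspace S" "S \<noteq> {0}"
    and nondeg: "\<And>x. x \<in> S \<Longrightarrow> \<forall>y\<in>S. g x y = 0 \<Longrightarrow> x = 0"
  shows "\<exists>e\<in>S. g e e \<noteq> 0"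
proof (rule ccontr)
  assume "\<not> ?thesis"
  then have null: "\<And>e. e \<in> S \<Longrightarrow> g e e = 0" by blast
  obtain x where x: "x \<in> S" "x \<noteq> 0" using S subspace_0 by blast
  then obtain y where y: "y \<in> S" "g x y \<noteq> 0" using nondeg by blast
  have "g (x + y) (x + y) = g x x + 2 * g x y + g y y"
    using sym[of y x] by simp
  then show False
    using null[of x] null[of y] null[of "x + y"] x y subspace_add[OF S(1)] by simp
qed

lemma unit_multiple_exists:
  assumes "g x x \<noteq> 0"
  shows "\<exists>r. g (r *\<^sub>R x) (r *\<^sub>R x) = 1 \<or> g (r *\<^sub>R x) (r *\<^sub>R x) = -1"
proof (intro exI)
  let ?r = "1 / sqrt \<bar>g x x\<bar>"
  have "g (?r *\<^sub>R x) (?r *\<^sub>R x) = g x x / \<bar>g x x\<bar>"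
    by (simp add: real_sqrt_mult[symmetric])
  then show "g (?r *\<^sub>R x) (?r *\<^sub>R x) = 1 \<or> g (?r *\<^sub>R x) (?r *\<^sub>R x) = -1"
    using assms by (cases "g x x > 0") auto
qed

lemma unit_orthogonal_complement:
  assumes S: "subspace S" and nondeg: "\<And>x. x \<in> S \<Longrightarrow> \<forall>y\<in>S. g x y = 0 \<Longrightarrow> x = 0"
    and eS: "e \<in> S" and unit: "g e e = 1 \<or> g e e = -1"
  defines "S' \<equiv> {x \<in> S. g e x = 0}"
  shows "subspace S'" and "dim S' < dim S"
    and decomp: "\<And>z. z \<in> S \<Longrightarrow> z - (g e z * g e e) *\<^sub>R e \<in> S'"
    and "\<And>x. x \<in> S' \<Longrightarrow> \<forall>y\<in>S'. g x y = 0 \<Longrightarrow> x = 0"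
proof -
  show S': "subspace S'"
    unfolding subspace_def S'_def using S by (auto simp: subspace_0 subspace_add subspace_scale)
  have "S' \<subset> S" using eS unit unfolding S'_def by force
  then show "dim S' < dim S"
    using dim_psubset span_eq_iff S S' by metis
  show decomp: "z - (g e z * g e e) *\<^sub>R e \<in> S'" if "z \<in> S" for z
    unfolding S'_def using that eS S unit by (auto simp: subspace_diff subspace_scale)
  fix x assume x: "x \<in> S'" and orth: "\<forall>y\<in>S'. g x y = 0"
  have "g x z = 0" if "z \<in> S" for z
  proof -
    have "g x z = g x (z - (g e z * g e e) *\<^sub>R e)"
      using x sym[of x e] unfolding S'_def by simp
    also have "\<dots> = 0" using orth decomp[OF that] by blast
    finally show ?thesis .
  qed
  then show "x = 0" using nondeg x unfolding S'_def by blast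
qed

lemma orthonormal_basis_of_subspace:
  assumes "subspace S" and "\<And>x. x \<in> S \<Longrightarrow> \<forall>y\<in>S. g x y = 0 \<Longrightarrow> x = 0"
  shows "\<exists>B\<subseteq>S. independent B \<and> span B = S \<and> (\<forall>e\<in>B. g e e = 1 \<or> g e e = -1)
     \<and> (\<forall>e\<in>B. \<forall>f\<in>B. e \<noteq> f \<longrightarrow> g e f = 0)"
  using assms
proof (induction "dim S" arbitrary: S rule: less_induct)
  case less
  note S = less.prems(1) and nondeg = less.prems(2)
  show ?case
  proof (cases "S = {0}")
    case True
    then show ?thesis by (intro exI[of _ "{}"]) (auto simp: independent_empty)
  next
    case False
    obtain e where eS: "e \<in> S" and unit: "g e e = 1 \<or> g e e = -1"
      using nonnull_vector_exists[OF S False nondeg] unit_multiple_exists subspace_scale[OF S]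
      by metis
    define S' where "S' = {x \<in> S. g e x = 0}"
    note S' = unit_orthogonal_complement[OF S nondeg eS unit, folded S'_def]
    obtain B where B: "B \<subseteq> S'" "independent B" "span B = S'"
      "\<forall>e\<in>B. g e e = 1 \<or> g e e = -1" "\<forall>e\<in>B. \<forall>f\<in>B. e \<noteq> f \<longrightarrow> g e f = 0"
      using less.hyps[OF S'(2,1,4)] by blast
    have "span (insert e B) = S"
    proof
      show "span (insert e B) \<subseteq> S"
        using span_minimal[of "insert e B" S] eS B(1) S unfolding S'_def by auto
      show "S \<subseteq> span (insert e B)"
        using S'(3) B(3) by (auto simp: span_breakdown_eq intro!: exI)
    qed
    moreover have "independent (insert e B)"
    proof (rule independent_insertI)
      show "e \<notin> span B" using B(3) unit unfolding S'_def by auto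
    qed (rule B(2))
    moreover have "g e f = 0" "g f e = 0" if "f \<in> B" for f
      using that B(1) sym[of f e] unfolding S'_def by auto
    ultimately show ?thesis using B eS unit
      by (intro exI[of _ "insert e B"]) (auto simp: S'_def)
  qed
qed

lemma orthonormal_basis_exists: "\<exists>B. orthonormal_basis g B"
  using orthonormal_basis_of_subspace[OF subspace_UNIV] nondegenerate
  unfolding orthonormal_basis_def by blast

lemma orthonormal_basis_expansion:
  assumes B: "orthonormal_basis g B"
  shows "(\<Sum>e\<in>B. (g e e * g v e) *\<^sub>R e) = v"
proof -
  have fin: "finite B" using B independent_bound unfolding orthonormal_basis_def by blast
  have "v \<in> span B" using B unfolding orthonormal_basis_def by auto
  then obtain u where u: "v = (\<Sum>f\<in>B. u f *\<^sub>R f)" using span_finite[OF fin] by auto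
  have "g v e = u e * g e e" if e: "e \<in> B" for e
  proof -
    have "g v e = u e * g e e + (\<Sum>f\<in>B-{e}. u f * g f e)"
      unfolding u using sum.remove[OF fin e] by simp
    also have "(\<Sum>f\<in>B-{e}. u f * g f e) = 0"
      using B e unfolding orthonormal_basis_def by (intro sum.neutral) auto
    finally show ?thesis by simp
  qed
  then have "(\<Sum>e\<in>B. (g e e * g v e) *\<^sub>R e) = (\<Sum>e\<in>B. u e *\<^sub>R e)"
    using B unfolding orthonormal_basis_def by (intro sum.cong) auto
  then show ?thesis using u by simp
qed

lemma jacobi_op_eqI:
  assumes "\<And>W. R Y X X W = g T W"
  shows "jacobi_op g R X Y = T"
  using orthonormal_basis_expansion[OF someI_ex[OF orthonormal_basis_exists]]
  unfolding jacobi_op_def Let_def assms by simp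

lemma skew_adjoint_swap:
  assumes "skew_adjoint g J"
  shows "g (J x) y = - g (J y) x"
  using assms sym[of x "J y"] unfolding skew_adjoint_def by simp

lemma skew_adjoint_isotropic:
  assumes "skew_adjoint g J"
  shows "g (J x) x = 0"
  using skew_adjoint_swap[OF assms, of x x] by simp

lemma R0_jacobi: "R0 g Y X X W = g (g X X *\<^sub>R Y - g X Y *\<^sub>R X) W"
  unfolding R0_def using sym[of X Y] by simp

lemma RJ_jacobi:
  assumes "skew_adjoint g J"
  shows "RJ g J Y X X W = g ((3 * g (J Y) X) *\<^sub>R J X) W"
  unfolding RJ_def using skew_adjoint_isotropic[OF assms, of X] by simp

end

lemma anticommuting_sum_square:
  fixes J :: "'i \<Rightarrow> 'a::real_vector \<Rightarrow> 'a"
  assumes fin: "finite I" and lin: "\<And>i. i \<in> I \<Longrightarrow> linear (J i)"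
    and anticomm: "\<And>i j. i \<in> I \<Longrightarrow> j \<in> I \<Longrightarrow>
      J i (J j x) + J j (J i x) = (if i = j then 2 * c i else 0) *\<^sub>R x"
  shows "(\<Sum>i\<in>I. b i *\<^sub>R J i (\<Sum>j\<in>I. b j *\<^sub>R J j x)) = (\<Sum>i\<in>I. b i * b i * c i) *\<^sub>R x"
proof -
  define S where "S = (\<Sum>i\<in>I. \<Sum>j\<in>I. (b i * b j) *\<^sub>R J i (J j x))"
  have lhs: "(\<Sum>i\<in>I. b i *\<^sub>R J i (\<Sum>j\<in>I. b j *\<^sub>R J j x)) = S"
    unfolding S_def using lin
    by (intro sum.cong refl) (simp add: linear_sum linear_scale scaleR_sum_right)
  have swap: "S = (\<Sum>i\<in>I. \<Sum>j\<in>I. (b i * b j) *\<^sub>R J j (J i x))"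
    unfolding S_def by (subst sum.swap) (simp add: mult.commute)
  have "2 *\<^sub>R S = S + S" by (rule scaleR_2)
  also have "\<dots> = (\<Sum>i\<in>I. \<Sum>j\<in>I. (b i * b j) *\<^sub>R (J i (J j x) + J j (J i x)))"
    by (subst (2) swap) (simp only: S_def sum.distrib[symmetric] scaleR_add_right)
  also have "\<dots> = (\<Sum>i\<in>I. \<Sum>j\<in>I. if i = j then (b i * b i * (2 * c i)) *\<^sub>R x else 0)"
    by (intro sum.cong refl) (simp add: anticomm)
  also have "\<dots> = (\<Sum>i\<in>I. (b i * b i * (2 * c i)) *\<^sub>R x)"
    using fin by simp
  also have "\<dots> = 2 *\<^sub>R ((\<Sum>i\<in>I. b i * b i * c i) *\<^sub>R x)"
    by (simp add: scaleR_sum_left[symmetric] sum_distrib_left mult_ac)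
  finally have "S = (\<Sum>i\<in>I. b i * b i * c i) *\<^sub>R x"
    by (subst (asm) scaleR_cancel_left) simp
  then show ?thesis using lhs by simp
qed

locale clifford_system = scalar_product_space g
  for g :: "'a::euclidean_space \<Rightarrow> 'a \<Rightarrow> real" +
  fixes I :: "'i set" and J :: "'i \<Rightarrow> 'a \<Rightarrow> 'a" and c :: "'i \<Rightarrow> real"
  assumes finite_index: "finite I"
    and skew_adjoint_J: "i \<in> I \<Longrightarrow> skew_adjoint g (J i)"
    and anticommute: "i \<in> I \<Longrightarrow> j \<in> I \<Longrightarrow>
      J i (J j x) + J j (J i x) = (if i = j then 2 * c i else 0) *\<^sub>R x"
begin

lemma linear_J: "i \<in> I \<Longrightarrow> linear (J i)"
  using skew_adjoint_J unfolding skew_adjoint_def by blast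

lemma g_J_J:
  assumes i: "i \<in> I" and k: "k \<in> I"
  shows "g (J i x) (J k x) = (if i = k then - c i * g x x else 0)"
proof -
  have "2 * g (J i x) (J k x) = g (J i x) (J k x) + g (J k x) (J i x)"
    using sym[of "J i x"] by simp
  also have "\<dots> = - g x (J i (J k x) + J k (J i x))"
    using skew_adjoint_J[OF i] skew_adjoint_J[OF k] unfolding skew_adjoint_def by simp
  also have "\<dots> = - (if i = k then 2 * c i else 0) * g x x"
    by (simp add: anticommute[OF i k])
  finally show ?thesis by auto
qed

lemma jacobi_op_curvature:
  "jacobi_op g (\<lambda>X Y Z W. a * R0 g X Y Z W + (\<Sum>i\<in>I. \<mu> i * RJ g (J i) X Y Z W)) X Y
     = a *\<^sub>R (g X X *\<^sub>R Y - g X Y *\<^sub>R X) + 3 *\<^sub>R (\<Sum>i\<in>I. (\<mu> i * g (J i Y) X) *\<^sub>R J i X)"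
proof (rule jacobi_op_eqI)
  fix W
  have "(\<Sum>i\<in>I. \<mu> i * RJ g (J i) Y X X W) = 3 * (\<Sum>i\<in>I. \<mu> i * g (J i Y) X * g (J i X) W)"
    unfolding sum_distrib_left by (intro sum.cong refl) (simp add: RJ_jacobi[OF skew_adjoint_J])
  then show "a * R0 g Y X X W + (\<Sum>i\<in>I. \<mu> i * RJ g (J i) Y X X W)
    = g (a *\<^sub>R (g X X *\<^sub>R Y - g X Y *\<^sub>R X) + 3 *\<^sub>R (\<Sum>i\<in>I. (\<mu> i * g (J i Y) X) *\<^sub>R J i X)) W"
    by (simp add: R0_jacobi)
qed

lemma sum_J_eq_0_imp_terms_eq_0:
  assumes card: "card {i \<in> I. c i = 0} \<le> 1" and nX: "g X X \<noteq> 0"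
    and comb: "(\<Sum>i\<in>I. b i *\<^sub>R J i X) = 0" and k: "k \<in> I"
  shows "b k *\<^sub>R J k X = 0"
proof -
  have bc: "b i * c i = 0" if i: "i \<in> I" for i
  proof -
    have "0 = g (J i X) (\<Sum>j\<in>I. b j *\<^sub>R J j X)" using comb by simp
    also have "\<dots> = (\<Sum>j\<in>I. b j * g (J i X) (J j X))" by simp
    also have "\<dots> = (\<Sum>j\<in>I. if i = j then - b i * c i * g X X else 0)"
      by (intro sum.cong refl) (simp add: g_J_J[OF i])
    also have "\<dots> = - b i * c i * g X X" using i finite_index by simp
    finally show ?thesis using nX by simp
  qed
  show ?thesis
  proof (cases "c k = 0")
    case False
    then show ?thesis using bc[OF k] by simp
  next
    case True
    have "c i \<noteq> 0" if i: "i \<in> I - {k}" for i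
    proof
      assume "c i = 0"
      then have "{i, k} \<subseteq> {i \<in> I. c i = 0}" using i k True by auto
      then have "card {i, k} \<le> card {i \<in> I. c i = 0}"
        using finite_index by (intro card_mono) auto
      then have "card {i, k} \<le> 1" using card by linarith
      then show False using i by auto
    qed
    then have "b i = 0" if "i \<in> I - {k}" for i using bc[of i] that by simp
    then have "(\<Sum>i\<in>I. b i *\<^sub>R J i X) = b k *\<^sub>R J k X"
      using sum.remove[OF finite_index k, of "\<lambda>i. b i *\<^sub>R J i X"] by simp
    then show ?thesis using comb by simp
  qed
qed

lemma eigen_relation_regular:
  assumes "d \<noteq> 0" and eig: "d *\<^sub>R Y = \<alpha> *\<^sub>R X - 3 *\<^sub>R (\<Sum>i\<in>I. b i *\<^sub>R J i X)"
  shows "\<alpha> *\<^sub>R Y + 3 *\<^sub>R (\<Sum>i\<in>I. b i *\<^sub>R J i Y)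
    = ((\<alpha> * \<alpha> - 9 * (\<Sum>i\<in>I. b i * b i * c i)) / d) *\<^sub>R X"
proof -
  let ?P = "\<Sum>i\<in>I. b i *\<^sub>R J i X" and ?Q = "\<Sum>i\<in>I. b i *\<^sub>R J i Y"
    and ?C = "\<Sum>i\<in>I. b i * b i * c i"
  have "d *\<^sub>R ?Q = (\<Sum>i\<in>I. b i *\<^sub>R J i (d *\<^sub>R Y))"
    unfolding scaleR_sum_right using linear_J
    by (intro sum.cong refl) (simp add: linear_scale)
  also have "\<dots> = (\<Sum>i\<in>I. \<alpha> *\<^sub>R (b i *\<^sub>R J i X) - 3 *\<^sub>R (b i *\<^sub>R J i ?P))"
    unfolding eig
    by (intro sum.cong refl) (simp add: linear_diff[OF linear_J] linear_scale[OF linear_J] algebra_simps)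
  also have "\<dots> = \<alpha> *\<^sub>R ?P - 3 *\<^sub>R (\<Sum>i\<in>I. b i *\<^sub>R J i ?P)"
    by (simp add: sum_subtractf scaleR_sum_right)
  also have "\<dots> = \<alpha> *\<^sub>R ?P - (3 * ?C) *\<^sub>R X"
    using anticommuting_sum_square[OF finite_index linear_J anticommute] by simp
  finally have dQ: "d *\<^sub>R ?Q = \<alpha> *\<^sub>R ?P - (3 * ?C) *\<^sub>R X" .
  let ?V = "\<alpha> *\<^sub>R Y + 3 *\<^sub>R ?Q"
  have "d *\<^sub>R ?V = \<alpha> *\<^sub>R (d *\<^sub>R Y) + 3 *\<^sub>R (d *\<^sub>R ?Q)"
    by (simp add: algebra_simps)
  also have "\<dots> = (\<alpha> * \<alpha> - 9 * ?C) *\<^sub>R X"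
    unfolding eig dQ by (simp add: algebra_simps)
  finally have dV: "d *\<^sub>R ?V = (\<alpha> * \<alpha> - 9 * ?C) *\<^sub>R X" .
  have "?V = (1 / d) *\<^sub>R (d *\<^sub>R ?V)" using \<open>d \<noteq> 0\<close> by simp
  also have "\<dots> = ((\<alpha> * \<alpha> - 9 * ?C) / d) *\<^sub>R X" unfolding dV by simp
  finally show ?thesis .
qed

lemma eigen_relation_singular:
  assumes card: "card {i \<in> I. c i = 0} \<le> 1" and nX: "g X X \<noteq> 0"
    and eig: "\<alpha> *\<^sub>R X = 3 *\<^sub>R (\<Sum>i\<in>I. (\<mu> i * g (J i Y) X) *\<^sub>R J i X)"
  shows "\<alpha> = 0" and "\<And>i. i \<in> I \<Longrightarrow> \<mu> i * g (J i Y) X = 0"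
proof -
  have "g X (J i X) = 0" if "i \<in> I" for i
    using skew_adjoint_isotropic[OF skew_adjoint_J[OF that]] sym[of X "J i X"] by simp
  then have "\<alpha> * g X X = 0" using arg_cong[OF eig, of "g X"] by simp
  then show \<alpha>: "\<alpha> = 0" using nX by simp
  fix i assume i: "i \<in> I"
  have "(\<Sum>i\<in>I. (\<mu> i * g (J i Y) X) *\<^sub>R J i X) = 0" using eig \<alpha> by simp
  from sum_J_eq_0_imp_terms_eq_0[OF card nX this i]
  have comb_i: "(\<mu> i * g (J i Y) X) *\<^sub>R J i X = 0" .
  have "\<mu> i * g (J i Y) X * g (J i X) Y = g ((\<mu> i * g (J i Y) X) *\<^sub>R J i X) Y" by simp
  also have "\<dots> = 0" unfolding comb_i by simp
  finally have "\<mu> i * g (J i Y) X * g (J i X) Y = 0" .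
  then have "\<mu> i * g (J i Y) X * g (J i Y) X = 0"
    using skew_adjoint_swap[OF skew_adjoint_J[OF i], of X Y] by simp
  then show "\<mu> i * g (J i Y) X = 0" by simp
qed

theorem jacobi_dual_clifford:
  assumes card: "card {i \<in> I. c i = 0} \<le> 1"
  shows "jacobi_dual g (\<lambda>X Y Z W. a * R0 g X Y Z W + (\<Sum>i\<in>I. \<mu> i * RJ g (J i) X Y Z W))"
  unfolding jacobi_dual_def eigenvector_def jacobi_op_curvature
proof (intro allI impI, elim conjE exE)
  fix X Y l
  assume nX: "g X X \<noteq> 0"
    and eig: "a *\<^sub>R (g X X *\<^sub>R Y - g X Y *\<^sub>R X) + 3 *\<^sub>R (\<Sum>i\<in>I. (\<mu> i * g (J i Y) X) *\<^sub>R J i X)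
      = l *\<^sub>R Y"
  define b where "b i = \<mu> i * g (J i Y) X" for i
  define \<alpha> where "\<alpha> = a * g X Y"
  define d where "d = a * g X X - l"
  have dY: "d *\<^sub>R Y = \<alpha> *\<^sub>R X - 3 *\<^sub>R (\<Sum>i\<in>I. b i *\<^sub>R J i X)"
    using eig unfolding d_def \<alpha>_def b_def by (simp add: algebra_simps)
  obtain k where k: "\<alpha> *\<^sub>R Y + 3 *\<^sub>R (\<Sum>i\<in>I. b i *\<^sub>R J i Y) = k *\<^sub>R X"
  proof (cases "d = 0")
    case True
    then have "\<alpha> = 0" "\<And>i. i \<in> I \<Longrightarrow> b i = 0"
      using eigen_relation_singular[OF card nX, of \<alpha> \<mu> Y] dY unfolding b_def by simp_all
    then show thesis using that[of 0] by simp
  next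
    case False
    then show thesis using that eigen_relation_regular[OF False dY] by blast
  qed
  have "(\<Sum>i\<in>I. (\<mu> i * g (J i X) Y) *\<^sub>R J i Y) = - (\<Sum>i\<in>I. b i *\<^sub>R J i Y)"
    unfolding b_def sum_negf[symmetric]
    by (intro sum.cong refl) (simp add: skew_adjoint_swap[OF skew_adjoint_J, of _ X Y])
  then have "a *\<^sub>R (g Y Y *\<^sub>R X - g Y X *\<^sub>R Y) + 3 *\<^sub>R (\<Sum>i\<in>I. (\<mu> i * g (J i X) Y) *\<^sub>R J i Y)
      = (a * g Y Y - k) *\<^sub>R X"
    using k sym[of X Y] unfolding \<alpha>_def by (simp add: algebra_simps)
  moreover have "X \<noteq> 0" using nX by auto
  ultimately show "X \<noteq> 0 \<and> (\<exists>k. a *\<^sub>R (g Y Y *\<^sub>R X - g Y X *\<^sub>R Y)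
      + 3 *\<^sub>R (\<Sum>i\<in>I. (\<mu> i * g (J i X) Y) *\<^sub>R J i Y) = k *\<^sub>R X)" by blast
qed

end

theorem mainTheorem2:
  fixes g :: "'a::euclidean_space \<Rightarrow> 'a \<Rightarrow> real"
    and J :: "nat \<Rightarrow> 'a \<Rightarrow> 'a" and c :: "nat \<Rightarrow> real" and \<mu> :: "nat \<Rightarrow> real" and m :: nat
  assumes "scalar_product g"
    and "\<And>i. i \<in> {1..m} \<Longrightarrow> skew_adjoint g (J i)"
    and "\<And>i j x. i \<in> {1..m} \<Longrightarrow> j \<in> {1..m} \<Longrightarrow>
           J i (J j x) + J j (J i x) = (if i = j then 2 * c i else 0) *\<^sub>R x"
    and "card {i \<in> {1..m}. c i = 0} \<le> 1"
  shows "jacobi_dual g (\<lambda>X Y Z W. \<mu> 0 * R0 g X Y Z W + (\<Sum>i=1..m. \<mu> i * RJ g (J i) X Y Z W))"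
proof -
  interpret clifford_system g "{1..m}" J c
    using assms(1-3) by unfold_locales auto
  show ?thesis using jacobi_dual_clifford[OF assms(4)] .
qed

end
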